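(* Let $C$ be a cycle of goods with at most $8$ goods and let three agents have arbitrary utility functions on $C$. Then an mms-allocation of the goods of $C$ to the three agents exists.
   Context: A cycle of goods has goods $v_1,\dots,v_m$ as vertices and edges $v_iv_{i+1}$ ($1\le i<m$) and $v_mv_1$. A utility function assigns a non-negative real to each good, extended additively to sets. A bundle is a set of goods inducing a connected subgraph (empty allowed); an $n$-split is a sequence of $n$ pairwise disjoint bundles (possibly empty) with union all goods. $\mathrm{mms}^{(n)}(C,u)=\max_{P_1,\dots,P_n}\min_i u(P_i)$ over all $n$-splits. An allocation to agents $1,\dots,n$ with utilities $u_1,\dots,u_n$ is an $n$-split $P_1,\dots,P_n$ with $P_i$ given to agent $i$; it is an mms-allocation if $u_i(P_i)\ge\mathrm{mms}^{(n)}(C,u_i)$ for all $i$. *)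

theory Defs
  imports Complex_Main
begin

text \<open>The cycle of goods C_m: goods are 0,...,m-1 (good v_(i+1) is represented by i);
  edges join i and (i+1) mod m.\<close>

definition cyc_adj :: "nat \<Rightarrow> nat \<Rightarrow> nat \<Rightarrow> bool" where
  "cyc_adj m i j \<longleftrightarrow> i < m \<and> j < m \<and> (j = Suc i mod m \<or> i = Suc j mod m)"

definition is_bundle :: "nat \<Rightarrow> nat set \<Rightarrow> bool" where
  "is_bundle m B \<longleftrightarrow> B \<subseteq> {..<m} \<and>
     (\<forall>x\<in>B. \<forall>y\<in>B. (x, y) \<in> {(a, b). a \<in> B \<and> b \<in> B \<and> cyc_adj m a b}\<^sup>*)"

definition is_split :: "nat \<Rightarrow> nat \<Rightarrow> (nat \<Rightarrow> nat set) \<Rightarrow> bool" where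
  "is_split m n P \<longleftrightarrow> (\<forall>i<n. is_bundle m (P i)) \<and>
     (\<forall>i<n. \<forall>j<n. i \<noteq> j \<longrightarrow> P i \<inter> P j = {}) \<and>
     (\<Union>i<n. P i) = {..<m}"

definition util :: "(nat \<Rightarrow> real) \<Rightarrow> nat set \<Rightarrow> real" where
  "util u S = (\<Sum>g\<in>S. u g)"

definition mms :: "nat \<Rightarrow> nat \<Rightarrow> (nat \<Rightarrow> real) \<Rightarrow> real" where
  "mms m n u = Max {(MIN i\<in>{..<n}. util u (P i)) | P. is_split m n P}"

definition is_mms_allocation :: "nat \<Rightarrow> nat \<Rightarrow> (nat \<Rightarrow> nat \<Rightarrow> real) \<Rightarrow> (nat \<Rightarrow> nat set) \<Rightarrow> bool" where
  "is_mms_allocation m n us P \<longleftrightarrow> is_split m n P \<and>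
     (\<forall>i<n. util (us i) (P i) \<ge> mms m n (us i))"

end

theory Submission
  imports Defs
begin

text \<open>
  Every bundle of the cycle is an arc, so a 3-split is a sequence of three consecutive arcs, and there
  are only finitely many of them. All that matters about an agent is the family of bundles she values at
  least as much as her maximin share, and this family has three properties: it contains all parts of one of her
  maximin splits; it contains a part of every split, since three maximin shares do not exceed the value
  of all goods; and it is closed under extending an arc by one good at either end. Reading the membership
  of each arc in each agent's family as a propositional variable, for at most eight goods these
  properties alone force a split into bundles X, Y, Z such that X is acceptable to the first agent and Y, Z
  are acceptable to the other two in some order. This is checked by evaluating all arcs and splits
  symbolically and calling a SAT solver.
\<close>

section \<open>Arcs\<close>

definition arc :: "nat \<Rightarrow> nat \<Rightarrow> nat \<Rightarrow> nat set" where
  "arc m s l = (\<lambda>t. (s + t) mod m) ` {..<l}"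

lemma arc_0 [simp]: "arc m s 0 = {}"
  by (simp add: arc_def)

lemma finite_arc [simp]: "finite (arc m s l)"
  by (simp add: arc_def)

lemma arc_subset: "0 < m \<Longrightarrow> arc m s l \<subseteq> {..<m}"
  by (auto simp: arc_def)

lemma arc_mod: "arc m (s mod m) l = arc m s l"
  by (simp add: arc_def mod_add_left_eq)

lemma arc_reduce: "m \<le> s \<Longrightarrow> arc m s l = arc m (s - m) l"
  by (metis arc_mod le_add_diff_inverse mod_add_self1)

lemma arc_append: "arc m s (a + b) = arc m s a \<union> arc m (s + a) b"
proof -
  have "{..<a + b} = {..<a} \<union> (+) a ` {..<b}"
  proof (rule set_eqI)
    fix x show "x \<in> {..<a + b} \<longleftrightarrow> x \<in> {..<a} \<union> (+) a ` {..<b}"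
      by (cases "x < a") (auto intro!: image_eqI[of _ _ "x - a"])
  qed
  then show ?thesis
    by (simp add: arc_def image_Un image_image add.assoc)
qed

lemma mod_add_left_inj:
  fixes m :: nat
  assumes "x < m" "y < m" "(s + x) mod m = (s + y) mod m"
  shows "x = y"
proof -
  have "x = y" if "x \<le> y" "y < m" "(s + x) mod m = (s + y) mod m" for x y
  proof -
    have "m dvd y - x"
      using that mod_eq_dvd_iff_nat[of "s + x" "s + y" m] by simp
    then show ?thesis
      using that by (metis diff_is_0_eq dvd_imp_le le_antisym less_imp_diff_less neq0_conv not_less)
  qed
  then show ?thesis
    using assms by (metis nat_le_linear)
qed

lemma card_arc: "l \<le> m \<Longrightarrow> card (arc m s l) = l"
  unfolding arc_def
  by (subst card_image) (auto intro!: inj_onI elim!: mod_add_left_inj[rotated 2])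

lemma arc_full: assumes "0 < m" shows "arc m s m = {..<m}"
  using card_arc[of m m s] arc_subset[OF assms, of s m]
  by (intro card_subset_eq) auto

lemma arc_disjoint: assumes "a + b \<le> m" shows "arc m s a \<inter> arc m (s + a) b = {}"
proof -
  have "card (arc m s a \<union> arc m (s + a) b) = card (arc m s a) + card (arc m (s + a) b)"
    using assms by (simp add: arc_append[symmetric] card_arc)
  then show ?thesis
    by (simp add: card_Un_Int[of "arc m s a"])
qed

lemma arc_complement: assumes "0 < m" "a \<le> m" shows "{..<m} - arc m s a = arc m (s + a) (m - a)"
  using arc_append[of m s a "m - a"] arc_disjoint[of a "m - a" m s] arc_full[OF assms(1), of s] assms(2)
  by auto

lemma arc_extend: "arc m s l \<subseteq> arc m s (l + 1)" "arc m (s + 1) l \<subseteq> arc m s (l + 1)"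
  using arc_append[of m s l 1] arc_append[of m s 1 l] by (auto simp: add.commute)

lemma arc_is_bundle: assumes "0 < m" shows "is_bundle m (arc m s l)"
proof -
  let ?R = "{(a, b). a \<in> arc m s l \<and> b \<in> arc m s l \<and> cyc_adj m a b}"
  have from_start: "(s mod m, (s + t) mod m) \<in> ?R\<^sup>*" if "t < l" for t
    using that
  proof (induction t)
    case (Suc t)
    have "((s + t) mod m, (s + Suc t) mod m) \<in> ?R"
      using Suc.prems assms by (auto simp: arc_def cyc_adj_def mod_Suc_eq intro!: image_eqI)
    with Suc show ?case by (meson Suc_lessD rtrancl_into_rtrancl)
  qed simp
  have "sym (?R\<^sup>*)"
    by (intro sym_rtrancl) (auto simp: sym_def cyc_adj_def)
  then have "(x, y) \<in> ?R\<^sup>*" if "x \<in> arc m s l" "y \<in> arc m s l" for x y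
    using that from_start unfolding arc_def by (auto intro: rtrancl_trans dest: symD)
  then show ?thesis
    using arc_subset[OF assms] by (auto simp: is_bundle_def)
qed

lemma step_connected_nat_set_is_interval:
  fixes T :: "nat set"
  assumes "finite T" "x \<in> T"
    and connected: "\<And>y. y \<in> T \<Longrightarrow> (x, y) \<in> {(a, b). a \<in> T \<and> b \<in> T \<and> (b = Suc a \<or> a = Suc b)}\<^sup>*"
  shows "T = {Min T..Max T}"
proof
  show "T \<subseteq> {Min T..Max T}"
    using assms(1) by auto
  show "{Min T..Max T} \<subseteq> T"
  proof
    fix r assume r: "r \<in> {Min T..Max T}"
    show "r \<in> T"
    proof (rule ccontr)
      assume "r \<notin> T"
      have same_side: "y < r \<longleftrightarrow> x < r"
        if "(x, y) \<in> {(a, b). a \<in> T \<and> b \<in> T \<and> (b = Suc a \<or> a = Suc b)}\<^sup>*" for y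
        using that by (induction rule: rtrancl_induct) (use \<open>r \<notin> T\<close> in \<open>auto intro: Suc_lessI\<close>)
      have "T \<noteq> {}"
        using assms(2) by auto
      then have "Min T \<in> T" "Max T \<in> T"
        using assms(1) by simp_all
      with r \<open>r \<notin> T\<close> have "Min T < r" "\<not> Max T < r"
        by (auto simp: order.order_iff_strict)
      then show False
        using same_side[OF connected[OF \<open>Min T \<in> T\<close>]] same_side[OF connected[OF \<open>Max T \<in> T\<close>]]
        by simp
    qed
  qed
qed

lemma rotate_back:
  fixes m g x :: nat
  assumes "g < m" "x < m"
  shows "(Suc g + (x + (m - Suc g)) mod m) mod m = x"
proof -
  have "(Suc g + (x + (m - Suc g)) mod m) mod m = (Suc g + (x + (m - Suc g))) mod m"
    by (simp only: mod_add_right_eq)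
  also have "Suc g + (x + (m - Suc g)) = x + m"
    using assms(1) by simp
  finally show ?thesis
    using assms(2) by simp
qed

lemma rotation_Suc:
  fixes m g a :: nat
  assumes "g < m" "a < m" "a \<noteq> g"
  defines "rot x \<equiv> (x + (m - Suc g)) mod m"
  shows "rot (Suc a mod m) = Suc (rot a)"
proof -
  have unrot: "(Suc g + rot x) mod m = x" if "x < m" for x
    using rotate_back[OF assms(1) that] by (simp only: rot_def)
  have "rot a \<noteq> m - 1"
  proof
    assume "rot a = m - 1"
    then have "rot a = rot g"
      using assms(1) by (simp add: rot_def)
    then show False
      using unrot[OF assms(1)] unrot[OF assms(2)] assms(3) by metis
  qed
  moreover have "rot a < m"
    using assms(1) by (simp add: rot_def)
  ultimately have "Suc (rot a) < m"
    by linarith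
  moreover have "rot (Suc a mod m) = Suc (rot a) mod m"
    by (simp add: rot_def mod_add_left_eq mod_Suc_eq)
  ultimately show ?thesis
    by simp
qed

lemma interval_image_eq_arc: "(\<lambda>t. (c + t) mod m) ` {p..q} = arc m (c + p) (Suc q - p)"
proof -
  have "{p..q} = (+) p ` {..<Suc q - p}"
    by (cases "p \<le> q") (auto simp: lessThan_atLeast0 image_add_atLeastLessThan)
  then show ?thesis
    by (simp add: arc_def image_image add.assoc)
qed

lemma bundle_avoiding_good_is_arc:
  assumes "is_bundle m B" "g < m" "g \<notin> B" "x \<in> B"
  shows "\<exists>s l. l \<le> m \<and> B = arc m s l"
proof -
  have B: "B \<subseteq> {..<m}"
    using assms(1) by (simp add: is_bundle_def)
  then have "finite B"
    by (rule finite_subset) simp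
  define rot where "rot y = (y + (m - Suc g)) mod m" for y
  let ?R = "{(a, b). a \<in> B \<and> b \<in> B \<and> cyc_adj m a b}"
  let ?S = "{(a, b). a \<in> rot ` B \<and> b \<in> rot ` B \<and> (b = Suc a \<or> a = Suc b)}"
  have rot_step: "(rot a, rot b) \<in> ?S" if "(a, b) \<in> ?R" for a b
    using that B assms(3) rotation_Suc[OF assms(2)] unfolding rot_def cyc_adj_def by fastforce
  have rot_path: "(rot x, rot y) \<in> ?S\<^sup>*" if "(x, y) \<in> ?R\<^sup>*" for y
    using that
  proof (induction rule: rtrancl_induct)
    case (step y z)
    then show ?case
      using rtrancl_into_rtrancl[OF _ rot_step[of y z]] by blast
  qed simp
  have "rot ` B = {Min (rot ` B)..Max (rot ` B)}"
  proof (rule step_connected_nat_set_is_interval)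
    show "finite (rot ` B)" "rot x \<in> rot ` B"
      using \<open>finite B\<close> assms(4) by simp_all
    fix y assume "y \<in> rot ` B"
    then obtain y' where "y' \<in> B" "y = rot y'"
      by blast
    then show "(rot x, y) \<in> ?S\<^sup>*"
      using rot_path assms(1,4) unfolding is_bundle_def by blast
  qed
  moreover have "(Suc g + rot y) mod m = y" if "y \<in> B" for y
    using rotate_back[OF assms(2)] that B unfolding rot_def by blast
  then have "(\<lambda>t. (Suc g + t) mod m) ` rot ` B = B"
    by (simp add: image_image cong: image_cong)
  ultimately have "B = arc m (Suc g + Min (rot ` B)) (Suc (Max (rot ` B)) - Min (rot ` B))"
    by (metis interval_image_eq_arc)
  moreover have "Max (rot ` B) \<in> rot ` B"
    using assms(4) \<open>finite B\<close> by (intro Max_in) auto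
  then have "Max (rot ` B) < m"
    using assms(2) by (auto simp: rot_def)
  ultimately show ?thesis
    by (metis Suc_leI diff_le_self le_trans)
qed

lemma bundle_is_arc:
  assumes "0 < m" "is_bundle m B"
  shows "\<exists>s l. l \<le> m \<and> B = arc m s l"
proof -
  have "B \<subseteq> {..<m}"
    using assms(2) by (simp add: is_bundle_def)
  then consider "B = {}" | "B = {..<m}" | g x where "g < m" "g \<notin> B" "x \<in> B"
    by blast
  then show ?thesis
  proof cases
    case 1
    then show ?thesis
      by (metis arc_0 le0)
  next
    case 2
    then show ?thesis
      using arc_full[OF assms(1)] by blast
  next
    case 3
    then show ?thesis
      using bundle_avoiding_good_is_arc[OF assms(2)] by blast
  qed
qed

lemma arc_containing_zero:
  assumes "s < m" "0 \<in> arc m s l"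
  shows "s = 0 \<or> m < s + l"
proof (rule ccontr)
  assume "\<not> (s = 0 \<or> m < s + l)"
  moreover obtain t where "t < l" "(s + t) mod m = 0"
    using assms(2) by (auto simp: arc_def)
  ultimately show False
    by (metis add_is_0 dvd_imp_le less_le_trans mod_0_imp_dvd nat_add_left_cancel_less not_gr0 not_le)
qed

lemma mod_predecessor:
  fixes m s t :: nat
  assumes "0 < m" "0 < t"
  shows "((s + t) mod m + m - 1) mod m = (s + (t - 1)) mod m"
proof -
  have "((s + t) mod m + m - 1) mod m = ((s + t) mod m + (m - 1)) mod m"
    using assms(1) by simp
  also have "\<dots> = (s + t + (m - 1)) mod m"
    by (simp only: mod_add_left_eq)
  also have "s + t + (m - 1) = s + (t - 1) + m"
    using assms by simp
  finally show ?thesis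
    by simp
qed

lemma arc_first:
  assumes "0 < m" "x \<in> arc m s l" "(x + m - 1) mod m \<notin> arc m s l"
  shows "x = s mod m"
proof -
  obtain t where t: "t < l" "x = (s + t) mod m"
    using assms(2) by (auto simp: arc_def)
  show ?thesis
  proof (cases t)
    case (Suc t')
    then have "(x + m - 1) mod m \<in> arc m s l"
      using t mod_predecessor[OF assms(1), of t s] by (auto simp: arc_def)
    with assms(3) show ?thesis ..
  qed (use t in simp)
qed

section \<open>Splits into three consecutive arcs\<close>

definition arc_split :: "nat \<Rightarrow> nat \<times> nat \<times> nat \<Rightarrow> nat set \<times> nat set \<times> nat set" where
  "arc_split m = (\<lambda>(s, a, b). (arc m s a, arc m (s + a) b, arc m (s + a + b) (m - a - b)))"

definition arc_splits :: "nat \<Rightarrow> (nat \<times> nat \<times> nat) list" where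
  "arc_splits m = [(s, a, b). s \<leftarrow> [0..<m], a \<leftarrow> [0..<m + 1], b \<leftarrow> [0..<m + 1 - a]]"

text \<open>
  The first arc of an anchored split passes through good 0: it starts at \<open>s \<le> m\<close> and reaches
  position \<open>m\<close>, which is good 0.
\<close>

definition anchored_arc_splits :: "nat \<Rightarrow> (nat \<times> nat \<times> nat) list" where
  "anchored_arc_splits m =
     [(s, a, b). s \<leftarrow> [1..<m + 1], a \<leftarrow> [m + 1 - s..<m + 1], b \<leftarrow> [0..<m + 1 - a]]"

definition arc_indices :: "nat \<Rightarrow> (nat \<times> nat) list" where
  "arc_indices m = [(s, l). s \<leftarrow> [0..<m], l \<leftarrow> [0..<m]]"

lemma mem_arc_splits: "(s, a, b) \<in> set (arc_splits m) \<longleftrightarrow> s < m \<and> a + b \<le> m"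
  by (auto simp: arc_splits_def image_iff)

lemma mem_anchored_arc_splits:
  "(s, a, b) \<in> set (anchored_arc_splits m) \<longleftrightarrow> 0 < s \<and> s \<le> m \<and> m < s + a \<and> a + b \<le> m"
  by (auto simp: anchored_arc_splits_def image_iff)

lemma arc_split_mod: "arc_split m (s mod m, a, b) = arc_split m (s, a, b)"
  by (simp add: arc_split_def add.assoc) (metis arc_mod mod_add_left_eq)

lemma all_less_3: "(\<forall>i<3. Q i) \<longleftrightarrow> Q 0 \<and> Q 1 \<and> Q (2::nat)"
  by (auto simp: numeral_3_eq_3 numeral_2_eq_2 less_Suc_eq)

lemma is_split_3_iff:
  "is_split m 3 P \<longleftrightarrow> is_bundle m (P 0) \<and> is_bundle m (P 1) \<and> is_bundle m (P 2) \<and>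
     P 0 \<inter> P 1 = {} \<and> P 0 \<inter> P 2 = {} \<and> P 1 \<inter> P 2 = {} \<and> P 0 \<union> P 1 \<union> P 2 = {..<m}"
proof -
  have "{..<3::nat} = {0, 1, 2}"
    by auto
  then show ?thesis
    unfolding is_split_def all_less_3 by (auto simp: Un_assoc)
qed

lemma arc_split_is_split:
  assumes "0 < m" "a + b \<le> m" "arc_split m (s, a, b) = (X, Y, Z)"
  shows "is_split m 3 ((!) [X, Y, Z])" "is_split m 3 ((!) [X, Z, Y])"
proof -
  have X: "X = arc m s a" and Y: "Y = arc m (s + a) b" and Z: "Z = {..<m} - arc m s (a + b)"
    using assms arc_complement[OF assms(1,2), of s] by (auto simp: arc_split_def add.assoc)
  have "X \<inter> Y = {}" "X \<union> Y = arc m s (a + b)"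
    using arc_disjoint[OF assms(2)] arc_append by (simp_all add: X Y)
  moreover have "is_bundle m X" "is_bundle m Y" "is_bundle m Z"
    using assms arc_is_bundle[OF assms(1)] by (auto simp: arc_split_def)
  moreover have "arc m s (a + b) \<subseteq> {..<m}"
    using arc_subset[OF assms(1)] .
  ultimately show "is_split m 3 ((!) [X, Y, Z])" "is_split m 3 ((!) [X, Z, Y])"
    unfolding is_split_3_iff Z by auto
qed

lemma split_part_eq_complement:
  assumes "is_split m 3 P" "i < 3" "k < 3" "r < 3" "i \<noteq> k" "i \<noteq> r" "k \<noteq> r"
  shows "P r = {..<m} - (P i \<union> P k)"
proof
  show "P r \<subseteq> {..<m} - (P i \<union> P k)"
    using assms unfolding is_split_def is_bundle_def by blast
  show "{..<m} - (P i \<union> P k) \<subseteq> P r"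
  proof
    fix x assume x: "x \<in> {..<m} - (P i \<union> P k)"
    then obtain j where "j < 3" "x \<in> P j"
      using assms(1) unfolding is_split_def by blast
    moreover from this x have "j = r"
      using assms(2-7) by (cases "j = i \<or> j = k") auto
    ultimately show "x \<in> P r"
      by simp
  qed
qed

lemma part_after_arc:
  assumes "0 < m" "is_split m 3 P" "i < 3" "P i = arc m s l" "0 < l" "l < m"
  obtains k l' where "k < 3" "k \<noteq> i" "l' \<le> m" "P k = arc m (s + l) l'"
proof -
  have disjoint: "P i \<inter> P k = {}" if "k < 3" "k \<noteq> i" for k
    using assms(2,3) that unfolding is_split_def by blast
  define e where "e = (s + l) mod m"
  have "e \<in> arc m (s + l) 1"
    by (simp add: e_def arc_def)
  then have "e \<notin> P i"
    using arc_disjoint[of l 1 m s] assms(4,6) by auto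
  moreover have "e \<in> (\<Union>j<3. P j)"
    using assms(1,2) unfolding is_split_def by (simp add: e_def)
  then obtain k where k: "k < 3" "e \<in> P k"
    by blast
  ultimately have "k \<noteq> i"
    by auto
  have "is_bundle m (P k)"
    using assms(2) k(1) unfolding is_split_def by blast
  then obtain s' l' where l': "l' \<le> m" "P k = arc m s' l'"
    using bundle_is_arc[OF assms(1)] by blast
  have "(e + m - 1) mod m = (s + (l - 1)) mod m"
    using mod_predecessor[OF assms(1,5)] by (simp add: e_def)
  then have "(e + m - 1) mod m \<in> P i"
    using assms(4,5) by (auto simp: arc_def intro!: image_eqI[of _ _ "l - 1"])
  then have "(e + m - 1) mod m \<notin> P k"
    using disjoint[OF k(1) \<open>k \<noteq> i\<close>] by blast
  then have "e = s' mod m"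
    using arc_first[OF assms(1)] k(2) l'(2) by blast
  then have "P k = arc m (s + l) l'"
    using l'(2) by (metis arc_mod e_def)
  with k(1) \<open>k \<noteq> i\<close> l'(1) show thesis
    by (rule that)
qed

lemma split_following_arc:
  assumes "0 < m" "is_split m 3 P" "i < 3" "P i = arc m s l" "0 < l" "l \<le> m"
  shows "\<exists>l'. l + l' \<le> m \<and> arc m (s + l) l' \<in> P ` {..<3} \<and> arc m (s + l + l') (m - l - l') \<in> P ` {..<3}"
proof -
  have disjoint: "P i \<inter> P k = {}" if "k < 3" "k \<noteq> i" for k
    using assms(2,3) that unfolding is_split_def by blast
  have subset: "P j \<subseteq> {..<m}" if "j < 3" for j
    using assms(2) that unfolding is_split_def is_bundle_def by blast
  show ?thesis
  proof (cases "l = m")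
    case True
    define k where "k = (i + 1) mod 3"
    have k: "k < 3" "k \<noteq> i"
      using assms(3) unfolding k_def by presburger+
    have "P i = {..<m}"
      using True assms(1,4) by (simp add: arc_full)
    then have "P k = {}"
      using disjoint[OF k] subset[OF k(1)] by blast
    then have "{} \<in> P ` {..<3}"
      using k(1) by force
    then show ?thesis
      using True by (intro exI[of _ 0]) simp
  next
    case False
    then obtain k l' where k: "k < 3" "k \<noteq> i" "l' \<le> m" and Pk: "P k = arc m (s + l) l'"
      using part_after_arc[OF assms(1-5)] assms(6) by (metis le_neq_implies_less)
    have "card (P i \<union> P k) = l + l'"
      using disjoint[OF k(1,2)] assms(4,6) Pk k(3) by (simp add: card_Un_disjoint card_arc)
    moreover have "card (P i \<union> P k) \<le> m"
      using subset[OF assms(3)] subset[OF k(1)] by (metis card_lessThan card_mono finite_lessThan le_sup_iff)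
    ultimately have "l + l' \<le> m"
      by simp
    define r where "r = 3 - i - k"
    have r: "r < 3" "i \<noteq> r" "k \<noteq> r"
      using assms(3) k(1,2) unfolding r_def by presburger+
    have "P r = {..<m} - arc m s (l + l')"
      using split_part_eq_complement[OF assms(2,3) k(1) r(1) k(2)[symmetric] r(2,3)]
      by (simp add: assms(4) Pk arc_append)
    then have "P r = arc m (s + l + l') (m - l - l')"
      using arc_complement[OF assms(1) \<open>l + l' \<le> m\<close>] by (simp add: add.assoc)
    then show ?thesis
      using \<open>l + l' \<le> m\<close> Pk k(1) r(1) by blast
  qed
qed

lemma split_as_anchored_arc_split:
  assumes "0 < m" "is_split m 3 P"
  obtains t X Y Z where "t \<in> set (anchored_arc_splits m)" "arc_split m t = (X, Y, Z)"
    "X \<in> P ` {..<3}" "Y \<in> P ` {..<3}" "Z \<in> P ` {..<3}"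
proof -
  have "0 \<in> (\<Union>j<3. P j)"
    using assms unfolding is_split_def by simp
  then obtain i where i: "i < 3" "0 \<in> P i"
    by blast
  have "is_bundle m (P i)"
    using assms(2) i(1) unfolding is_split_def by blast
  then obtain s l where l: "l \<le> m" "P i = arc m s l"
    using bundle_is_arc[OF assms(1)] by blast
  then have Pi: "P i = arc m (s mod m) l"
    by (simp add: arc_mod)
  have "0 < l"
    using i(2) l(2) by (metis arc_0 empty_iff gr0I)
  have "s mod m = 0 \<or> m < s mod m + l"
    using arc_containing_zero[of "s mod m" m l] assms(1) i(2) Pi by simp
  define s0 where "s0 = (if s mod m = 0 then m else s mod m)"
  have s0: "0 < s0" "s0 \<le> m" "m < s0 + l" "s0 mod m = s mod m"
    using \<open>s mod m = 0 \<or> m < s mod m + l\<close> \<open>0 < l\<close> assms(1) mod_less_divisor[OF assms(1), of s]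
    unfolding s0_def by (auto split: if_splits)
  obtain l' where l': "l + l' \<le> m" "arc m (s + l) l' \<in> P ` {..<3}"
    "arc m (s + l + l') (m - l - l') \<in> P ` {..<3}"
    using split_following_arc[OF assms(1,2) i(1) l(2) \<open>0 < l\<close> l(1)] by blast
  have "(s0, l, l') \<in> set (anchored_arc_splits m)"
    using s0 l'(1) by (simp add: mem_anchored_arc_splits)
  moreover have "arc_split m (s0, l, l') = (arc m s l, arc m (s + l) l', arc m (s + l + l') (m - l - l'))"
    using arc_split_mod[of m s0 l l'] arc_split_mod[of m s l l'] s0(4) by (simp add: arc_split_def)
  moreover have "arc m s l \<in> P ` {..<3}"
    using l(2) i(1) by (metis image_eqI lessThan_iff)
  ultimately show thesis
    using l'(2,3) by (rule that)
qed

section \<open>Maximin shares\<close>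

lemma util_mono:
  assumes "\<forall>g<m. 0 \<le> u g" "X \<subseteq> Y" "Y \<subseteq> {..<m}"
  shows "util u X \<le> util u Y"
  unfolding util_def using assms finite_subset[OF assms(3)] by (intro sum_mono2) auto

lemma sum_util_split:
  assumes "is_split m n P"
  shows "(\<Sum>i<n. util u (P i)) = util u {..<m}"
proof -
  have "finite (P i)" if "i < n" for i
    using assms that finite_subset[of "P i" "{..<m}"] unfolding is_split_def is_bundle_def by blast
  moreover have "\<forall>i\<in>{..<n}. \<forall>j\<in>{..<n}. i \<noteq> j \<longrightarrow> P i \<inter> P j = {}"
    using assms unfolding is_split_def by blast
  ultimately have "util u (\<Union>i<n. P i) = (\<Sum>i<n. util u (P i))"
    unfolding util_def by (intro sum.UNION_disjoint) auto
  then show ?thesis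
    using assms unfolding is_split_def by simp
qed

lemma is_bundle_all: "is_bundle m {..<m}"
  using arc_is_bundle[of m 0 m] arc_full[of m 0] by (cases "m = 0") (auto simp: is_bundle_def)

lemma is_split_all: "0 < n \<Longrightarrow> is_split m n (\<lambda>i. if i = 0 then {..<m} else {})"
  using is_bundle_all[of m] by (auto simp: is_split_def is_bundle_def)

lemma mms_attained:
  assumes "0 < n"
  obtains P where "is_split m n P" "mms m n u = (MIN i\<in>{..<n}. util u (P i))"
proof -
  let ?V = "{(MIN i\<in>{..<n}. util u (P i)) | P. is_split m n P}"
  have "?V \<subseteq> util u ` Pow {..<m}"
  proof
    fix v assume "v \<in> ?V"
    then obtain P where P: "is_split m n P" "v = (MIN i\<in>{..<n}. util u (P i))"
      by blast
    have "v \<in> (\<lambda>i. util u (P i)) ` {..<n}"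
      unfolding P(2) using assms by (intro Min_in) auto
    moreover have "P i \<subseteq> {..<m}" if "i < n" for i
      using P(1) that unfolding is_split_def is_bundle_def by blast
    ultimately show "v \<in> util u ` Pow {..<m}"
      by blast
  qed
  then have "finite ?V"
    by (rule finite_subset) simp
  moreover have "?V \<noteq> {}"
    using is_split_all[OF assms, of m] by blast
  ultimately have "mms m n u \<in> ?V"
    unfolding mms_def by (rule Max_in)
  then show thesis
    using that by blast
qed

lemma mms_le_part_of_split:
  assumes "0 < n" "is_split m n Q"
  shows "\<exists>i<n. mms m n u \<le> util u (Q i)"
proof (rule ccontr)
  assume "\<not> (\<exists>i<n. mms m n u \<le> util u (Q i))"
  then have "(\<Sum>i<n. util u (Q i)) < (\<Sum>i<n. mms m n u)"
    using assms(1) by (intro sum_strict_mono) auto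
  moreover obtain P where P: "is_split m n P" "mms m n u = (MIN i\<in>{..<n}. util u (P i))"
    using mms_attained[OF assms(1)] .
  then have "(\<Sum>i<n. mms m n u) \<le> (\<Sum>i<n. util u (P i))"
    by (intro sum_mono) simp
  ultimately show False
    using sum_util_split[OF assms(2)] sum_util_split[OF P(1)] by simp
qed

definition acceptable :: "nat \<Rightarrow> (nat \<Rightarrow> real) \<Rightarrow> nat set \<Rightarrow> bool" where
  "acceptable m u X \<longleftrightarrow> mms m 3 u \<le> util u X"

lemma anchored_split_has_acceptable_part:
  assumes "0 < m" "t \<in> set (anchored_arc_splits m)" "arc_split m t = (X, Y, Z)"
  shows "acceptable m u X \<or> acceptable m u Y \<or> acceptable m u Z"
proof -
  obtain s a b where "t = (s, a, b)"
    by (cases t)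
  with assms(2) have "a + b \<le> m"
    by (simp add: mem_anchored_arc_splits)
  then have "is_split m 3 ((!) [X, Y, Z])"
    using arc_split_is_split(1)[OF assms(1)] assms(3) \<open>t = (s, a, b)\<close> by blast
  then obtain i where "i < 3" "acceptable m u ([X, Y, Z] ! i)"
    using mms_le_part_of_split[of 3 m "(!) [X, Y, Z]" u] by (auto simp: acceptable_def)
  then show ?thesis
    by (auto simp: less_Suc_eq numeral_3_eq_3)
qed

lemma acceptable_arc_mono:
  assumes "0 < m" "\<forall>g<m. 0 \<le> u g" "X \<subseteq> arc m s l" "acceptable m u X"
  shows "acceptable m u (arc m s l)"
  using util_mono[OF assms(2,3) arc_subset[OF assms(1)]] assms(4) by (simp add: acceptable_def)

section \<open>Acceptance profiles\<close>

text \<open>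
  An abstraction of an agent: \<open>A\<close> is her family of acceptable bundles and \<open>W\<close> marks one of her
  maximin splits. The maximin split is a separate predicate rather than an existential statement about
  \<open>A\<close>, so that after evaluation every condition is a conjunction of short clauses.
\<close>

definition acceptance_profile ::
    "nat \<Rightarrow> (nat set \<Rightarrow> bool) \<Rightarrow> (nat \<times> nat \<times> nat \<Rightarrow> bool) \<Rightarrow> bool" where
  "acceptance_profile m A W \<longleftrightarrow>
     list_ex W (anchored_arc_splits m) \<and>
     list_all (\<lambda>t. case arc_split m t of (X, Y, Z) \<Rightarrow> W t \<longrightarrow> A X \<and> A Y \<and> A Z)
       (anchored_arc_splits m) \<and>
     list_all (\<lambda>t. case arc_split m t of (X, Y, Z) \<Rightarrow> A X \<or> A Y \<or> A Z) (anchored_arc_splits m) \<and>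
     list_all (\<lambda>(s, l). (A (arc m s l) \<longrightarrow> A (arc m s (l + 1))) \<and>
                        (A (arc m (s + 1) l) \<longrightarrow> A (arc m s (l + 1)))) (arc_indices m)"

lemma maximin_acceptance_profile:
  assumes "0 < m" "\<forall>g<m. 0 \<le> u g"
  shows "\<exists>W. acceptance_profile m (acceptable m u) W"
proof -
  obtain P where P: "is_split m 3 P" "mms m 3 u = (MIN i\<in>{..<3}. util u (P i))"
    using mms_attained[of 3] by auto
  have part_acceptable: "acceptable m u X" if "X \<in> P ` {..<3}" for X
    using that unfolding P(2) acceptable_def by auto
  obtain t0 X0 Y0 Z0 where t0: "t0 \<in> set (anchored_arc_splits m)" "arc_split m t0 = (X0, Y0, Z0)"
    "X0 \<in> P ` {..<3}" "Y0 \<in> P ` {..<3}" "Z0 \<in> P ` {..<3}"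
    using split_as_anchored_arc_split[OF assms(1) P(1)] .
  have "list_ex (\<lambda>t. t = t0) (anchored_arc_splits m)"
    using t0(1) by (simp add: list_ex_iff)
  moreover have "list_all (\<lambda>t. case arc_split m t of (X, Y, Z) \<Rightarrow>
      t = t0 \<longrightarrow> acceptable m u X \<and> acceptable m u Y \<and> acceptable m u Z) (anchored_arc_splits m)"
    using t0(2-5) part_acceptable by (auto simp: list_all_iff)
  moreover have "list_all (\<lambda>t. case arc_split m t of (X, Y, Z) \<Rightarrow>
      acceptable m u X \<or> acceptable m u Y \<or> acceptable m u Z) (anchored_arc_splits m)"
    using anchored_split_has_acceptable_part[OF assms(1)] by (auto simp: list_all_iff split: prod.split)
  moreover have "list_all (\<lambda>(s, l). (acceptable m u (arc m s l) \<longrightarrow> acceptable m u (arc m s (l + 1))) \<and>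
      (acceptable m u (arc m (s + 1) l) \<longrightarrow> acceptable m u (arc m s (l + 1)))) (arc_indices m)"
    using acceptable_arc_mono[OF assms arc_extend(1)] acceptable_arc_mono[OF assms arc_extend(2)]
    by (auto simp: list_all_iff)
  ultimately have "acceptance_profile m (acceptable m u) (\<lambda>t. t = t0)"
    unfolding acceptance_profile_def by blast
  then show ?thesis
    by blast
qed

lemma upt_rec_add1: "[i..<j] = (if i < j then i # [i + 1..<j] else [])"
  by (simp add: upt_rec)

lemma list_all_weak_cong: "xs = ys \<Longrightarrow> list_all P xs = list_all P ys"
  by simp

lemma list_ex_weak_cong: "xs = ys \<Longrightarrow> list_ex P xs = list_ex P ys"
  by simp

lemma map_weak_cong: "xs = ys \<Longrightarrow> map f xs = map f ys"
  by simp

lemma acceptance_profiles_common_split: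
  assumes "m \<in> {1..8}"
    and "acceptance_profile m A0 W0" "acceptance_profile m A1 W1" "acceptance_profile m A2 W2"
  shows "list_ex (\<lambda>t. case arc_split m t of (X, Y, Z) \<Rightarrow> A0 X \<and> (A1 Y \<and> A2 Z \<or> A2 Y \<and> A1 Z))
    (arc_splits m)"
proof -
  txt \<open>
    \<open>simp\<close> turns the lists into ground formulas over the atoms \<open>Ai (arc m s l)\<close> and
    \<open>Wi (s, a, b)\<close>, and \<open>satx\<close> decides the resulting propositional problem. \<open>arc_reduce\<close>,
    \<open>arc_full\<close> and the numeral rules give every arc a unique normal form, so that equal arcs become the
    same atom. The weak congruences stop \<open>simp\<close> from rewriting under the binders of the list
    comprehensions before the lists are evaluated, which would be prohibitively slow.
  \<close>
  have "m \<in> {1, 2, 3, 4, 5, 6, 7, 8}"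
    using assms(1) by auto
  then show ?thesis
    using assms(2-4)
    unfolding acceptance_profile_def anchored_arc_splits_def arc_indices_def arc_split_def arc_splits_def
    supply upt_rec_add1[simp] One_nat_def[simp del] One_nat_def[symmetric, simp]
      arc_full[simp] arc_reduce[simp] list_all_weak_cong[cong] list_ex_weak_cong[cong] map_weak_cong[cong]
    by (elim insertE emptyE; hypsubst; simp (no_asm_use); satx)
qed

lemma is_mms_allocation_3I:
  assumes "is_split m 3 P" "acceptable m (us 0) (P 0)" "acceptable m (us 1) (P 1)" "acceptable m (us 2) (P 2)"
  shows "is_mms_allocation m 3 us P"
  using assms unfolding is_mms_allocation_def acceptable_def all_less_3 by simp

lemma mms_allocation_of_arc_splits:
  assumes "0 < m"
    and "list_ex (\<lambda>t. case arc_split m t of (X, Y, Z) \<Rightarrow> acceptable m (us 0) X \<and>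
      (acceptable m (us 1) Y \<and> acceptable m (us 2) Z \<or> acceptable m (us 2) Y \<and> acceptable m (us 1) Z))
      (arc_splits m)"
  shows "\<exists>P. is_mms_allocation m 3 us P"
proof -
  obtain s a b X Y Z where "a + b \<le> m" and XYZ: "arc_split m (s, a, b) = (X, Y, Z)"
    and "acceptable m (us 0) X"
    and "acceptable m (us 1) Y \<and> acceptable m (us 2) Z \<or> acceptable m (us 2) Y \<and> acceptable m (us 1) Z"
    using assms(2) unfolding list_ex_iff by (force simp: mem_arc_splits)
  moreover from this(1,2) have "is_split m 3 ((!) [X, Y, Z])" "is_split m 3 ((!) [X, Z, Y])"
    using arc_split_is_split[OF assms(1)] by blast+
  ultimately have "is_mms_allocation m 3 us ((!) [X, Y, Z]) \<or> is_mms_allocation m 3 us ((!) [X, Z, Y])"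
    by (auto intro: is_mms_allocation_3I)
  then show ?thesis
    by blast
qed

lemma mms_allocation_no_goods: "is_mms_allocation 0 n us (\<lambda>_. {})"
proof -
  have "mms 0 n (us i) \<le> 0" if "i < n" for i
  proof -
    have "0 < n"
      using that by simp
    then obtain P where P: "is_split 0 n P" "mms 0 n (us i) = (MIN j\<in>{..<n}. util (us i) (P j))"
      by (rule mms_attained)
    then have "util (us i) (P j) = 0" if "j < n" for j
      using that unfolding is_split_def is_bundle_def util_def by auto
    then show ?thesis
      using P(2) that by (auto intro: Min_le)
  qed
  then show ?thesis
    by (auto simp: is_mms_allocation_def is_split_def is_bundle_def util_def)
qed

theorem theorem2p4:
  fixes m :: nat and us :: "nat \<Rightarrow> nat \<Rightarrow> real"
  assumes "m \<le> 8"
    and "\<And>i g. i < 3 \<Longrightarrow> g < m \<Longrightarrow> us i g \<ge> 0"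
  shows "\<exists>P. is_mms_allocation m 3 us P"
proof (cases "m = 0")
  case True
  then show ?thesis
    using mms_allocation_no_goods by blast
next
  case False
  have "\<forall>i<3. \<exists>W. acceptance_profile m (acceptable m (us i)) W"
    using maximin_acceptance_profile False assms(2) by auto
  then obtain W where "\<forall>i<3. acceptance_profile m (acceptable m (us i)) (W i)"
    by metis
  then show ?thesis
    using False assms(1) unfolding all_less_3
    by (intro mms_allocation_of_arc_splits acceptance_profiles_common_split) auto
qed

end
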